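(* Let $k$ be a positive integer, let $f$ be a $(2k+1)$-coloring automorphism, and let $L$ be a link with $\det L\neq0$ admitting non-trivial $(2k+1)$-colorings. Then no set $S\subseteq\{f(0),f(1),\dots,f(k)\}$ is a $(2k+1)$-sufficient set of colors for $L$.
   Context: For a positive integer $n$, an $n$-coloring of a link diagram is an assignment of an element of $\mathbf{Z}/n\mathbf{Z}$ to each arc such that at every crossing, with over-arc color $b$ and under-arc colors $a,c$, $2b-a-c\equiv 0\pmod n$; it is non-trivial if at least two distinct colors are used. An $n$-coloring automorphism is a permutation $f$ of $\mathbf{Z}/n\mathbf{Z}$ satisfying $f(2b-a)=2f(b)-f(a)$ for all $a,b$. An $n$-sufficient set of colors for $L$ is a set of residues mod $n$ such that some diagram of $L$ admits a non-trivial $n$-coloring using only colors from this set. $\det L$ is the determinant of $L$. *)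

theory Defs
  imports "Jordan_Normal_Form.Determinant" "Jordan_Normal_Form.DL_Submatrix"
begin

text \<open>Combinatorial model of a link diagram: a pair (n, cs) where the arcs are
  0, ..., n-1 and cs lists the crossings; a crossing (b, a, c) has over-arc b
  and under-arcs a and c.\<close>

type_synonym diagram = "nat \<times> (nat \<times> nat \<times> nat) list"

definition arcs :: "diagram \<Rightarrow> nat set" where
  "arcs D = {..<fst D}"

definition crossings :: "diagram \<Rightarrow> (nat \<times> nat \<times> nat) list" where
  "crossings D = snd D"

definition well_formed_diagram :: "diagram \<Rightarrow> bool" where
  "well_formed_diagram D \<longleftrightarrow> fst D \<ge> 1 \<and>
     (\<forall>(b, a, c) \<in> set (crossings D). b \<in> arcs D \<and> a \<in> arcs D \<and> c \<in> arcs D)"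

definition n_coloring :: "nat \<Rightarrow> diagram \<Rightarrow> (nat \<Rightarrow> int) \<Rightarrow> bool" where
  "n_coloring n D cl \<longleftrightarrow>
     (\<forall>i \<in> arcs D. cl i \<in> {0..<int n}) \<and>
     (\<forall>(b, a, c) \<in> set (crossings D). (2 * cl b - cl a - cl c) mod int n = 0)"

definition nontrivial_coloring :: "diagram \<Rightarrow> (nat \<Rightarrow> int) \<Rightarrow> bool" where
  "nontrivial_coloring D cl \<longleftrightarrow> (\<exists>i \<in> arcs D. \<exists>j \<in> arcs D. cl i \<noteq> cl j)"

definition coloring_automorphism :: "nat \<Rightarrow> (int \<Rightarrow> int) \<Rightarrow> bool" where
  "coloring_automorphism n f \<longleftrightarrow> bij_betw f {0..<int n} {0..<int n} \<and>
     (\<forall>a \<in> {0..<int n}. \<forall>b \<in> {0..<int n}. f ((2 * b - a) mod int n) = (2 * f b - f a) mod int n)"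

definition sufficient_for_diagram :: "nat \<Rightarrow> int set \<Rightarrow> diagram \<Rightarrow> bool" where
  "sufficient_for_diagram n S D \<longleftrightarrow>
     (\<exists>cl. n_coloring n D cl \<and> nontrivial_coloring D cl \<and> (\<forall>i \<in> arcs D. cl i \<in> S))"

definition coloring_matrix :: "diagram \<Rightarrow> int mat" where
  "coloring_matrix D = mat (length (crossings D)) (fst D)
     (\<lambda>(r, j). case crossings D ! r of (b, a, c) \<Rightarrow>
        2 * (if j = b then 1 else 0) - (if j = a then 1 else 0) - (if j = c then 1 else 0))"

text \<open>Determinant of the diagram: the non-negative generator of the ideal spanned by
  all (n-1) x (n-1) minors of the coloring matrix (n = number of arcs), i.e. of
  the first elementary ideal of the coloring module. For a classical diagram with
  as many crossings as arcs this is the absolute value of any first minor.\<close>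

definition diagram_det :: "diagram \<Rightarrow> int" where
  "diagram_det D = Gcd {det (submatrix (coloring_matrix D) I J) | I J.
      I \<subseteq> {..<length (crossings D)} \<and> J \<subseteq> {..<fst D} \<and>
      card I = fst D - 1 \<and> card J = fst D - 1}"

end

theory Submission
  imports Defs
begin

text \<open>Pulling a coloring with colors in \<open>f ` {0..k}\<close> back along the automorphism \<open>f\<close>
  gives colors in \<open>{0..k}\<close>; for these \<open>\<bar>2b - a - c\<bar> \<le> 2k < 2k + 1\<close>, so each crossing
  relation holds over the integers and not just modulo \<open>2k + 1\<close>. A non-constant integer
  solution of the crossing relations, shifted so that it vanishes on a deleted arc, is a
  non-zero kernel vector of every first minor of the coloring matrix. Hence all these minors
  vanish and the determinant is 0.\<close>

definition integer_coloring :: "diagram \<Rightarrow> (nat \<Rightarrow> int) \<Rightarrow> bool" where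
  "integer_coloring D v \<longleftrightarrow> (\<forall>(b, a, c) \<in> set (crossings D). 2 * v b - v a - v c = 0)"

lemma bij_betw_pick:
  assumes "finite J"
  shows "bij_betw (pick J) {..<card J} J"
proof -
  have inj: "inj_on (pick J) {..<card J}"
    unfolding inj_on_def by (metis lessThan_iff nat_neq_iff pick_mono)
  have "pick J ` {..<card J} \<subseteq> J" using pick_in_set by auto
  moreover have "card (pick J ` {..<card J}) = card J" using card_image[OF inj] by simp
  ultimately have "pick J ` {..<card J} = J" using card_subset_eq[OF assms] by blast
  thus ?thesis using inj unfolding bij_betw_def by simp
qed

lemma det_submatrix_eq_0_if_kernel_vector:
  fixes M :: "'a :: idom mat" and u :: "nat \<Rightarrow> 'a"
  assumes M: "M \<in> carrier_mat nr nc"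
    and I: "I \<subseteq> {..<nr}" and J: "J \<subseteq> {..<nc}" and card: "card I = card J"
    and kernel: "\<And>r. r < nr \<Longrightarrow> (\<Sum>j<nc. M $$ (r, j) * u j) = 0"
    and supp: "\<And>j. j < nc \<Longrightarrow> j \<notin> J \<Longrightarrow> u j = 0"
    and nonzero: "j0 \<in> J" "u j0 \<noteq> 0"
  shows "det (submatrix M I J) = 0"
proof -
  define m where "m = card J"
  have rows: "{i. i < dim_row M \<and> i \<in> I} = I" and cols: "{j. j < dim_col M \<and> j \<in> J} = J"
    using M I J by auto
  define A where "A = submatrix M I J"
  have A: "A \<in> carrier_mat m m"
    unfolding A_def m_def carrier_mat_def by (simp add: dim_submatrix rows cols card)
  have bij: "bij_betw (pick J) {..<m} J"
    unfolding m_def using bij_betw_pick J finite_subset by blast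
  define w where "w = vec m (\<lambda>s. u (pick J s))"
  have w: "w \<in> carrier_vec m" unfolding w_def by simp
  have "w \<noteq> 0\<^sub>v m"
  proof
    assume "w = 0\<^sub>v m"
    obtain s where "s < m" "pick J s = j0"
      using bij nonzero(1) unfolding bij_betw_def by (metis imageE lessThan_iff)
    then have "w $ s = u j0" unfolding w_def by simp
    with \<open>w = 0\<^sub>v m\<close> \<open>s < m\<close> nonzero(2) show False by simp
  qed
  moreover have "A *\<^sub>v w = 0\<^sub>v m"
  proof (rule eq_vecI)
    fix t assume "t < dim_vec (0\<^sub>v m)"
    hence t: "t < m" by simp
    define r where "r = pick I t"
    have "r \<in> I" unfolding r_def using pick_in_set t card m_def by metis
    hence r: "r < nr" using I by auto
    have "(A *\<^sub>v w) $ t = (\<Sum>s<m. M $$ (r, pick J s) * u (pick J s))"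
      using A w t submatrix_index[of t M I _ J] rows cols card
      by (simp add: scalar_prod_def atLeast0LessThan A_def r_def w_def m_def)
    also have "\<dots> = (\<Sum>j\<in>J. M $$ (r, j) * u j)"
      using sum.reindex_bij_betw[OF bij, of "\<lambda>j. M $$ (r, j) * u j"] by simp
    also have "\<dots> = (\<Sum>j<nc. M $$ (r, j) * u j)"
      using J supp by (intro sum.mono_neutral_left) auto
    also have "\<dots> = 0" using kernel r .
    finally show "(A *\<^sub>v w) $ t = 0\<^sub>v m $ t" using t by simp
  qed (use A in simp)
  ultimately show ?thesis
    using det_0_iff_vec_prod_zero[OF A] w unfolding A_def by blast
qed

lemma coloring_matrix_row_sum:
  assumes "well_formed_diagram D" and "r < length (crossings D)"
    and "crossings D ! r = (b, a, c)"
  shows "(\<Sum>j<fst D. coloring_matrix D $$ (r, j) * v j) = 2 * v b - v a - v c"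
proof -
  have "(b, a, c) \<in> set (crossings D)" using assms(2,3) by (metis nth_mem)
  hence arcs: "b < fst D" "a < fst D" "c < fst D"
    using assms(1) unfolding well_formed_diagram_def arcs_def by auto
  have "(\<Sum>j<fst D. coloring_matrix D $$ (r, j) * v j)
      = (\<Sum>j<fst D. 2 * (if j = b then v j else 0) - (if j = a then v j else 0)
                    - (if j = c then v j else 0))"
    using assms(2,3) by (intro sum.cong) (auto simp: coloring_matrix_def)
  also have "\<dots> = 2 * v b - v a - v c"
    using arcs by (simp add: sum_subtractf sum_distrib_left[symmetric])
  finally show ?thesis .
qed

lemma diagram_det_eq_0_if_nonconstant_integer_coloring:
  assumes wf: "well_formed_diagram D" and v: "integer_coloring D v"
    and ij: "i \<in> arcs D" "j \<in> arcs D" "v i \<noteq> v j"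
  shows "diagram_det D = 0"
proof -
  let ?M = "coloring_matrix D" and ?N = "fst D"
  have M: "?M \<in> carrier_mat (length (crossings D)) ?N"
    unfolding coloring_matrix_def carrier_mat_def by simp
  have minor_eq_0: "det (submatrix ?M I J) = 0"
    if I: "I \<subseteq> {..<length (crossings D)}" and J: "J \<subseteq> {..<?N}"
      and cI: "card I = ?N - 1" and cJ: "card J = ?N - 1" for I J
  proof -
    have "?N \<ge> 1" using wf unfolding well_formed_diagram_def by simp
    hence "J \<noteq> {..<?N}" using cJ by auto
    then obtain j0 where j0: "j0 < ?N" "j0 \<notin> J" using J by auto
    have J_eq: "J = {..<?N} - {j0}"
      using J j0 cJ by (intro card_subset_eq) auto
    define u where "u x = v x - v j0" for x
    obtain i' where i': "i' \<in> arcs D" "v i' \<noteq> v j0" using ij by metis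
    show ?thesis
    proof (rule det_submatrix_eq_0_if_kernel_vector[OF M I J _ _ _, of u i'])
      fix r assume r: "r < length (crossings D)"
      obtain b a c where bac: "crossings D ! r = (b, a, c)" by (metis prod_cases3)
      have "(b, a, c) \<in> set (crossings D)" using r bac by (metis nth_mem)
      hence "2 * u b - u a - u c = 0" using v unfolding integer_coloring_def u_def by auto
      thus "(\<Sum>j<?N. ?M $$ (r, j) * u j) = 0" using coloring_matrix_row_sum[OF wf r bac] by simp
    qed (use cI cJ J_eq i' in \<open>auto simp: u_def arcs_def\<close>)
  qed
  have "{det (submatrix ?M I J) | I J. I \<subseteq> {..<length (crossings D)} \<and> J \<subseteq> {..<?N} \<and>
      card I = ?N - 1 \<and> card J = ?N - 1} \<subseteq> {0}"
    using minor_eq_0 by blast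
  thus ?thesis unfolding diagram_det_def by (simp add: Gcd_0_iff)
qed

lemma coloring_automorphism_crossing_relation:
  assumes f: "coloring_automorphism (2 * k + 1) f"
    and abc: "a \<in> {0..int k}" "b \<in> {0..int k}" "c \<in> {0..int k}"
    and rel: "(2 * f b - f a - f c) mod int (2 * k + 1) = 0"
  shows "2 * b - a - c = 0"
proof -
  define n where "n = int (2 * k + 1)"
  have bij: "bij_betw f {0..<n} {0..<n}"
    and hom: "f ((2 * b - a) mod n) = (2 * f b - f a) mod n"
    using f abc unfolding coloring_automorphism_def n_def by auto
  have abc_n: "a \<in> {0..<n}" "b \<in> {0..<n}" "c \<in> {0..<n}" using abc unfolding n_def by auto
  have "(2 * f b - f a) mod n = f c mod n"
    using rel unfolding n_def by (simp add: mod_eq_dvd_iff dvd_eq_mod_eq_0 algebra_simps)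
  also have "\<dots> = f c" using bij abc_n(3) by (auto dest: bij_betw_apply)
  finally have "f ((2 * b - a) mod n) = f c" using hom by simp
  moreover have "(2 * b - a) mod n \<in> {0..<n}" unfolding n_def by simp
  ultimately have "(2 * b - a) mod n = c"
    using inj_onD[OF bij_betw_imp_inj_on[OF bij]] abc_n(3) by blast
  hence "n dvd 2 * b - a - c"
    using abc_n(3) by (simp add: mod_eq_dvd_iff [symmetric])
  moreover have "\<bar>2 * b - a - c\<bar> < n" using abc unfolding n_def by auto
  ultimately show ?thesis using dvd_imp_le_int[of "2 * b - a - c" n] by fastforce
qed

theorem corollary4p1:
  fixes k :: nat and f :: "int \<Rightarrow> int" and D :: diagram
  assumes "k > 0"
    and "coloring_automorphism (2 * k + 1) f"
    and "well_formed_diagram D"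
    and "diagram_det D \<noteq> 0"
    and "\<exists>cl. n_coloring (2 * k + 1) D cl \<and> nontrivial_coloring D cl"
  shows "\<forall>S \<subseteq> f ` {0..int k}. \<not> sufficient_for_diagram (2 * k + 1) S D"
proof (intro allI impI notI)
  fix S assume "S \<subseteq> f ` {0..int k}" and "sufficient_for_diagram (2 * k + 1) S D"
  then obtain cl where cl: "n_coloring (2 * k + 1) D cl" "nontrivial_coloring D cl"
      "\<forall>i \<in> arcs D. cl i \<in> f ` {0..int k}"
    unfolding sufficient_for_diagram_def by blast
  hence "\<forall>i \<in> arcs D. \<exists>x \<in> {0..int k}. f x = cl i"
    unfolding image_iff by metis
  then obtain g where g: "\<forall>i \<in> arcs D. g i \<in> {0..int k} \<and> f (g i) = cl i"
    by (metis bchoice)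
  have "integer_coloring D g"
    unfolding integer_coloring_def
  proof (intro ballI, clarify)
    fix b a c assume crossing: "(b, a, c) \<in> set (crossings D)"
    hence "b \<in> arcs D" "a \<in> arcs D" "c \<in> arcs D"
      using assms(3) unfolding well_formed_diagram_def by auto
    moreover have "(2 * cl b - cl a - cl c) mod int (2 * k + 1) = 0"
      using cl(1) crossing unfolding n_coloring_def by auto
    ultimately show "2 * g b - g a - g c = 0"
      using coloring_automorphism_crossing_relation[OF assms(2), of "g a" "g b" "g c"] g by simp
  qed
  moreover obtain i j where "i \<in> arcs D" "j \<in> arcs D" "cl i \<noteq> cl j"
    using cl(2) unfolding nontrivial_coloring_def by blast
  moreover from this have "g i \<noteq> g j" using g by metis
  ultimately show False
    using diagram_det_eq_0_if_nonconstant_integer_coloring assms(3,4) by blast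
qed

end
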